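(* Let $I=\langle Q,D,\tau_{in},\tau_{out}\rangle$ be an instance of DTP, and let $C_I$ be the set consisting of all objects occurring in $\Pi_Q\cup D$ together with one fresh object $o_I$. Then DTP holds for $I$ if and only if for every tuple $\vec o$ over $C_I$ and every $\tau_{in}$-update $U$ involving only objects in $C_I$, $\vec o\in Q(D\cup U,\tau_{out})$ implies $\vec o\in Q(D,\tau_{out})$.
   Context: Temporal Datalog. Constants are partitioned into objects and integer time points; variables into object variables and time variables. A time term is a time point, a time variable, or an expression $t+k$ with $t$ a time variable and $k\in\mathbb{Z}$. Each predicate is either extensional (EDB) or intensional (IDB) and has an arity $n\ge0$, each position being of object sort or time sort; a predicate is rigid if all its positions are of object sort, and temporal if its last position is of time sort and all others are of object sort. An atom $P(t_1,\dots,t_n)$ has terms of the required sorts. A rule is $\bigwedge_i\alpha_i\to\alpha$ with $\alpha$ and all $\alpha_i$ rigid or temporal atoms, $\alpha$ IDB whenever the body is nonempty, and every head variable occurring in the body. A program is a finite set of rules. A fact is a ground rigid or temporal atom without $+$ (identified with the rule $\top\to\alpha$); a dataset is a finite set of EDB facts. Rules are read as universally quantified first-order sentences with $+$ interpreted as integer addition; $\Pi\models\alpha$ denotes entailment. A query is $Q=\langle P_Q,\Pi_Q\rangle$ with $\Pi_Q$ a program and $P_Q$ an IDB predicate of $\Pi_Q$; it is temporal if $P_Q$ is temporal. For a temporal query $Q$, dataset $D$ and time point $\tau$, $Q(D,\tau)$ is the set of tuples of objects $\vec o$ with $\Pi_Q\cup D\models P_Q(\vec o,\tau)$. A $\tau_{in}$-history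 is a dataset consisting of rigid facts and temporal facts with time argument $\le\tau_{in}$; a $\tau_{in}$-update is a dataset consisting of temporal facts with time argument $>\tau_{in}$. Definitive Time Point (DTP): an instance is $\langle Q,D,\tau_{in},\tau_{out}\rangle$ with $Q$ a temporal query, $D$ a $\tau_{in}$-history and $\tau_{out}\le\tau_{in}$; DTP holds for it iff $Q(D,\tau_{out})=Q(D\cup U,\tau_{out})$ for every $\tau_{in}$-update $U$. *)

theory Defs
  imports Main
begin

text \<open>Objects have type 'o, time points are integers. Object variables and time
variables are two disjoint sorts, both indexed by nat.\<close>

datatype 'o oterm = OConst 'o | OVar nat

datatype tterm = TConst int | TVar nat | TPlus nat int

text \<open>Atoms that may occur in rules are rigid (no time argument) or temporal
(object arguments followed by one time argument in last position).\<close>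
datatype ('p,'o) atom = Atom 'p "'o oterm list" "tterm option"

datatype ('p,'o) rule = Rule "('p,'o) atom list" "('p,'o) atom"

datatype ('p,'o) gatom = GAtom 'p "'o list" "int option"

text \<open>Predicate signature: number of object positions, whether the predicate is
temporal (an extra last time position), and whether it is extensional.\<close>
datatype 'p sig = Sig (arity: "'p \<Rightarrow> nat") (temporal: "'p \<Rightarrow> bool") (is_edb: "'p \<Rightarrow> bool")

fun apred :: "('p,'o) atom \<Rightarrow> 'p" where
  "apred (Atom P _ _) = P"

fun gpred :: "('p,'o) gatom \<Rightarrow> 'p" where
  "gpred (GAtom P _ _) = P"

fun gtime :: "('p,'o) gatom \<Rightarrow> int option" where
  "gtime (GAtom _ _ t) = t"

fun wf_atom :: "'p sig \<Rightarrow> ('p,'o) atom \<Rightarrow> bool" where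
  "wf_atom S (Atom P os t) = (length os = arity S P \<and> (t \<noteq> None \<longleftrightarrow> temporal S P))"

fun wf_gatom :: "'p sig \<Rightarrow> ('p,'o) gatom \<Rightarrow> bool" where
  "wf_gatom S (GAtom P os t) = (length os = arity S P \<and> (t \<noteq> None \<longleftrightarrow> temporal S P))"

fun ovar :: "'o oterm \<Rightarrow> nat set" where
  "ovar (OConst _) = {}"
| "ovar (OVar v) = {v}"

fun tvar :: "tterm \<Rightarrow> nat set" where
  "tvar (TConst _) = {}"
| "tvar (TVar v) = {v}"
| "tvar (TPlus v _) = {v}"

fun ovars :: "('p,'o) atom \<Rightarrow> nat set" where
  "ovars (Atom _ os _) = \<Union> (ovar ` set os)"

fun tvars :: "('p,'o) atom \<Rightarrow> nat set" where
  "tvars (Atom _ _ t) = (case t of None \<Rightarrow> {} | Some tt \<Rightarrow> tvar tt)"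

fun oconst :: "'o oterm \<Rightarrow> 'o set" where
  "oconst (OConst c) = {c}"
| "oconst (OVar _) = {}"

fun atom_objs :: "('p,'o) atom \<Rightarrow> 'o set" where
  "atom_objs (Atom _ os _) = \<Union> (oconst ` set os)"

fun rule_atoms :: "('p,'o) rule \<Rightarrow> ('p,'o) atom set" where
  "rule_atoms (Rule body h) = insert h (set body)"

definition prog_objs :: "('p,'o) rule set \<Rightarrow> 'o set" where
  "prog_objs \<Pi> = (\<Union>r\<in>\<Pi>. \<Union> (atom_objs ` rule_atoms r))"

definition prog_preds :: "('p,'o) rule set \<Rightarrow> 'p set" where
  "prog_preds \<Pi> = (\<Union>r\<in>\<Pi>. apred ` rule_atoms r)"

fun gatom_objs :: "('p,'o) gatom \<Rightarrow> 'o set" where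
  "gatom_objs (GAtom _ os _) = set os"

definition data_objs :: "('p,'o) gatom set \<Rightarrow> 'o set" where
  "data_objs D = (\<Union>g\<in>D. gatom_objs g)"

fun wf_rule :: "'p sig \<Rightarrow> ('p,'o) rule \<Rightarrow> bool" where
  "wf_rule S (Rule body h) =
     ((\<forall>a\<in>insert h (set body). wf_atom S a)
      \<and> (body \<noteq> [] \<longrightarrow> \<not> is_edb S (apred h))
      \<and> ovars h \<subseteq> (\<Union>a\<in>set body. ovars a)
      \<and> tvars h \<subseteq> (\<Union>a\<in>set body. tvars a))"

definition program :: "'p sig \<Rightarrow> ('p,'o) rule set \<Rightarrow> bool" where
  "program S \<Pi> = (finite \<Pi> \<and> (\<forall>r\<in>\<Pi>. wf_rule S r))"

definition dataset :: "'p sig \<Rightarrow> ('p,'o) gatom set \<Rightarrow> bool" where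
  "dataset S D = (finite D \<and> (\<forall>g\<in>D. wf_gatom S g \<and> is_edb S (gpred g)))"

fun inst_o :: "(nat \<Rightarrow> 'o) \<Rightarrow> 'o oterm \<Rightarrow> 'o" where
  "inst_o \<sigma> (OConst c) = c"
| "inst_o \<sigma> (OVar v) = \<sigma> v"

fun inst_t :: "(nat \<Rightarrow> int) \<Rightarrow> tterm \<Rightarrow> int" where
  "inst_t \<theta> (TConst i) = i"
| "inst_t \<theta> (TVar v) = \<theta> v"
| "inst_t \<theta> (TPlus v k) = \<theta> v + k"

fun inst_atom :: "(nat \<Rightarrow> 'o) \<Rightarrow> (nat \<Rightarrow> int) \<Rightarrow> ('p,'o) atom \<Rightarrow> ('p,'o) gatom" where
  "inst_atom \<sigma> \<theta> (Atom P os t) = GAtom P (map (inst_o \<sigma>) os) (map_option (inst_t \<theta>) t)"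

text \<open>A (Herbrand) interpretation is a set of ground atoms; a rule, read as a universally
quantified sentence with + as integer addition, holds in it if it holds under every
ground substitution.\<close>
fun sat_rule :: "('p,'o) gatom set \<Rightarrow> ('p,'o) rule \<Rightarrow> bool" where
  "sat_rule M (Rule body h) =
     (\<forall>\<sigma> \<theta>. (\<forall>a\<in>set body. inst_atom \<sigma> \<theta> a \<in> M) \<longrightarrow> inst_atom \<sigma> \<theta> h \<in> M)"

definition entails :: "('p,'o) rule set \<Rightarrow> ('p,'o) gatom set \<Rightarrow> ('p,'o) gatom \<Rightarrow> bool" where
  "entails \<Pi> D g = (\<forall>M. D \<subseteq> M \<longrightarrow> (\<forall>r\<in>\<Pi>. sat_rule M r) \<longrightarrow> g \<in> M)"

text \<open>A query is a pair (P_Q, \<Pi>_Q).\<close>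
definition temporal_query :: "'p sig \<Rightarrow> 'p \<times> ('p,'o) rule set \<Rightarrow> bool" where
  "temporal_query S Q = (program S (snd Q) \<and> \<not> is_edb S (fst Q)
      \<and> fst Q \<in> prog_preds (snd Q) \<and> temporal S (fst Q))"

definition answers :: "'p \<times> ('p,'o) rule set \<Rightarrow> ('p,'o) gatom set \<Rightarrow> int \<Rightarrow> 'o list set" where
  "answers Q D \<tau> = {os. entails (snd Q) D (GAtom (fst Q) os (Some \<tau>))}"

definition is_history :: "'p sig \<Rightarrow> ('p,'o) gatom set \<Rightarrow> int \<Rightarrow> bool" where
  "is_history S D tin = (dataset S D \<and>
     (\<forall>g\<in>D. case gtime g of None \<Rightarrow> True | Some t \<Rightarrow> t \<le> tin))"

definition is_update :: "'p sig \<Rightarrow> ('p,'o) gatom set \<Rightarrow> int \<Rightarrow> bool" where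
  "is_update S U tin = (dataset S U \<and>
     (\<forall>g\<in>U. case gtime g of None \<Rightarrow> False | Some t \<Rightarrow> t > tin))"

definition dtp_instance :: "'p sig \<Rightarrow> 'p \<times> ('p,'o) rule set \<Rightarrow> ('p,'o) gatom set \<Rightarrow> int \<Rightarrow> int \<Rightarrow> bool" where
  "dtp_instance S Q D tin tout = (temporal_query S Q \<and> is_history S D tin \<and> tout \<le> tin)"

definition DTP :: "'p sig \<Rightarrow> 'p \<times> ('p,'o) rule set \<Rightarrow> ('p,'o) gatom set \<Rightarrow> int \<Rightarrow> int \<Rightarrow> bool" where
  "DTP S Q D tin tout = (\<forall>U. is_update S U tin \<longrightarrow> answers Q D tout = answers Q (D \<union> U) tout)"

end

theory Submission
  imports Defs
begin

text \<open>Entailment is preserved under any renaming h of objects that fixes the constants of the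
  program, because h maps models back to models by taking preimages. Collapsing every object
  outside C_I to o_I therefore turns a counterexample update into one over C_I, and an answer
  over D alone can only mention objects of the program or of D, so the collapse does not change
  it.\<close>

fun map_gatom :: "('o \<Rightarrow> 'o) \<Rightarrow> ('p,'o) gatom \<Rightarrow> ('p,'o) gatom" where
  "map_gatom h (GAtom P os t) = GAtom P (map h os) t"

lemma wf_gatom_map_gatom [simp]: "wf_gatom S (map_gatom h g) = wf_gatom S g"
  by (cases g) auto

lemma gpred_map_gatom [simp]: "gpred (map_gatom h g) = gpred g"
  by (cases g) auto

lemma gtime_map_gatom [simp]: "gtime (map_gatom h g) = gtime g"
  by (cases g) auto

lemma gatom_objs_map_gatom [simp]: "gatom_objs (map_gatom h g) = h ` gatom_objs g"
  by (cases g) auto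

lemma map_gatom_ident: "(\<And>c. c \<in> gatom_objs g \<Longrightarrow> h c = c) \<Longrightarrow> map_gatom h g = g"
  by (cases g) (auto intro: map_idI)

lemma is_update_image_map_gatom:
  "is_update S U tin \<Longrightarrow> is_update S (map_gatom h ` U) tin"
  by (auto simp: is_update_def dataset_def)

lemma map_gatom_inst_atom:
  assumes "\<And>c. c \<in> atom_objs a \<Longrightarrow> h c = c"
  shows "map_gatom h (inst_atom \<sigma> \<theta> a) = inst_atom (h \<circ> \<sigma>) \<theta> a"
proof -
  have "h (inst_o \<sigma> x) = inst_o (h \<circ> \<sigma>) x" if "\<forall>c\<in>oconst x. h c = c" for x
    using that by (cases x) auto
  then show ?thesis
    using assms by (cases a) auto
qed

lemma entails_mono: "entails \<Pi> D g \<Longrightarrow> D \<subseteq> E \<Longrightarrow> entails \<Pi> E g"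
  by (auto simp: entails_def)

lemma entails_map_gatom:
  assumes "entails \<Pi> E g" and fix_prog: "\<And>c. c \<in> prog_objs \<Pi> \<Longrightarrow> h c = c"
  shows "entails \<Pi> (map_gatom h ` E) (map_gatom h g)"
  unfolding entails_def
proof (intro allI impI)
  fix M assume EM: "map_gatom h ` E \<subseteq> M" and sat: "\<forall>r\<in>\<Pi>. sat_rule M r"
  let ?M' = "{x. map_gatom h x \<in> M}"
  have "sat_rule ?M' r" if r: "r \<in> \<Pi>" for r
  proof -
    obtain body hd where r_eq: "r = Rule body hd" by (cases r)
    have "atom_objs a \<subseteq> prog_objs \<Pi>" if "a \<in> insert hd (set body)" for a
      using that r unfolding r_eq prog_objs_def by (auto intro!: bexI[of _ "Rule body hd"])
    then have inst: "map_gatom h (inst_atom \<sigma> \<theta> a) = inst_atom (h \<circ> \<sigma>) \<theta> a"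
      if "a \<in> insert hd (set body)" for a \<sigma> \<theta>
      using that fix_prog by (blast intro: map_gatom_inst_atom)
    have "sat_rule M (Rule body hd)" using sat r r_eq by auto
    then show ?thesis
      unfolding r_eq sat_rule.simps by (auto simp: inst)
  qed
  moreover have "E \<subseteq> ?M'" using EM by auto
  ultimately have "g \<in> ?M'" using assms(1) by (auto simp: entails_def)
  then show "map_gatom h g \<in> M" by simp
qed

lemma gatom_objs_inst_atom:
  "gatom_objs (inst_atom \<sigma> \<theta> a) \<subseteq> atom_objs a \<union> \<sigma> ` ovars a"
proof -
  have "inst_o \<sigma> x \<in> oconst x \<union> \<sigma> ` ovar x" for x by (cases x) auto
  then show ?thesis by (cases a) fastforce
qed

lemma image_ovars_subset_gatom_objs:
  "\<sigma> ` ovars a \<subseteq> gatom_objs (inst_atom \<sigma> \<theta> a)"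
proof -
  have "\<sigma> ` ovar x = {inst_o \<sigma> x} \<inter> \<sigma> ` ovar x" for x by (cases x) auto
  then show ?thesis by (cases a) fastforce
qed

lemma answers_mono: "answers Q D \<tau> \<subseteq> answers Q (D \<union> U) \<tau>"
  by (auto simp: answers_def intro: entails_mono)

lemma entails_gatom_objs:
  assumes "program S \<Pi>" and "entails \<Pi> E g"
  shows "gatom_objs g \<subseteq> prog_objs \<Pi> \<union> data_objs E"
proof -
  let ?C = "prog_objs \<Pi> \<union> data_objs E"
  let ?M = "{x. gatom_objs x \<subseteq> ?C}"
  have "sat_rule ?M r" if r: "r \<in> \<Pi>" for r
  proof -
    obtain body hd where r_eq: "r = Rule body hd" by (cases r)
    have safe: "ovars hd \<subseteq> (\<Union>a\<in>set body. ovars a)"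
      using assms(1) r r_eq unfolding program_def by (metis wf_rule.simps)
    have hd_objs: "atom_objs hd \<subseteq> prog_objs \<Pi>"
      using r r_eq by (auto simp: prog_objs_def)
    show ?thesis unfolding r_eq sat_rule.simps
    proof (intro allI impI)
      fix \<sigma> \<theta> assume body: "\<forall>a\<in>set body. inst_atom \<sigma> \<theta> a \<in> ?M"
      have "\<sigma> ` ovars a \<subseteq> ?C" if "a \<in> set body" for a
        using body that image_ovars_subset_gatom_objs[of \<sigma> a \<theta>] by auto
      then have "\<sigma> ` ovars hd \<subseteq> ?C" using safe by blast
      then show "inst_atom \<sigma> \<theta> hd \<in> ?M"
        using gatom_objs_inst_atom[of \<sigma> \<theta> hd] hd_objs by (simp, blast)
    qed
  qed
  moreover have "E \<subseteq> ?M" by (auto simp: data_objs_def)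
  ultimately have "g \<in> ?M" using assms(2) by (auto simp: entails_def)
  then show ?thesis by simp
qed

lemma answers_map_gatom:
  assumes "os \<in> answers Q (D \<union> U) \<tau>"
    and "\<And>c. c \<in> prog_objs (snd Q) \<union> data_objs D \<Longrightarrow> h c = c"
  shows "map h os \<in> answers Q (D \<union> map_gatom h ` U) \<tau>"
proof -
  have "map_gatom h g = g" if "g \<in> D" for g
    using that assms(2) by (intro map_gatom_ident) (auto simp: data_objs_def)
  then have "map_gatom h ` D = D" by simp
  moreover have "entails (snd Q) (map_gatom h ` (D \<union> U)) (map_gatom h (GAtom (fst Q) os (Some \<tau>)))"
    using assms by (intro entails_map_gatom) (auto simp: answers_def)
  ultimately show ?thesis by (simp add: answers_def image_Un)
qed

lemma answers_objs:
  "program S (snd Q) \<Longrightarrow> os \<in> answers Q D \<tau> \<Longrightarrow> set os \<subseteq> prog_objs (snd Q) \<union> data_objs D"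
  using entails_gatom_objs by (fastforce simp: answers_def)

theorem proposition1:
  fixes S :: "'p sig" and Q :: "'p \<times> ('p,'o) rule set" and D :: "('p,'o) gatom set"
    and tin tout :: int and oI :: 'o
  assumes inst: "dtp_instance S Q D tin tout"
    and fresh: "oI \<notin> prog_objs (snd Q) \<union> data_objs D"
  shows "DTP S Q D tin tout \<longleftrightarrow>
    (\<forall>os U. set os \<subseteq> insert oI (prog_objs (snd Q) \<union> data_objs D)
       \<longrightarrow> is_update S U tin
       \<longrightarrow> data_objs U \<subseteq> insert oI (prog_objs (snd Q) \<union> data_objs D)
       \<longrightarrow> os \<in> answers Q (D \<union> U) tout
       \<longrightarrow> os \<in> answers Q D tout)"
    (is "_ \<longleftrightarrow> ?small_updates")
proof
  assume ?small_updates
  let ?C = "prog_objs (snd Q) \<union> data_objs D"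
  define h where "h x = (if x \<in> ?C then x else oI)" for x
  have prog: "program S (snd Q)" using inst by (simp add: dtp_instance_def temporal_query_def)
  have "os \<in> answers Q D tout"
    if U: "is_update S U tin" and os: "os \<in> answers Q (D \<union> U) tout" for U os
  proof -
    have "map h os \<in> answers Q (D \<union> map_gatom h ` U) tout"
      using answers_map_gatom[OF os] by (simp add: h_def)
    moreover have "data_objs (map_gatom h ` U) \<subseteq> insert oI ?C"
      by (auto simp: data_objs_def h_def)
    moreover have "set (map h os) \<subseteq> insert oI ?C" by (auto simp: h_def)
    ultimately have "map h os \<in> answers Q D tout"
      using \<open>?small_updates\<close> is_update_image_map_gatom[OF U] by blast
    moreover from this have "set (map h os) \<subseteq> ?C"
      using answers_objs[OF prog] by blast
    then have "x \<in> ?C" if "x \<in> set os" for x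
      using that fresh by (force simp: h_def split: if_splits)
    then have "map h os = os"
      by (auto simp: h_def intro: map_idI)
    ultimately show ?thesis by simp
  qed
  then show "DTP S Q D tin tout"
    unfolding DTP_def using answers_mono by blast
qed (auto simp: DTP_def)

end
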